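(* Let $\mathcal{E}=\{e_1,\dots,e_n\}$ be an orthonormal basis for $\mathbb{R}^n$ and let $M$ be a $k$-dimensional maximal $\mathcal{E}$-PR subspace with $k<[(n+1)/2]$. Then $k=\min\{|\mathrm{supp}(x)|:0\neq x\in M\}$.
   Context: $[a]$ is the integer part of $a$. For $x=\sum_{i=1}^n\alpha_ie_i$, $\mathrm{supp}(x)=\{i:\alpha_i\neq0\}$. A subspace $M$ is an $\mathcal{E}$-PR subspace if $\{P_Me_i\}_{i=1}^n$ (with $P_M$ the orthogonal projection onto $M$) spans $M$ and whenever $x,y\in M$ satisfy $|\langle x,P_Me_i\rangle|=|\langle y,P_Me_i\rangle|$ for all $i$, then $x=\pm y$. It is maximal if it is not a proper subspace of another $\mathcal{E}$-PR subspace. *)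

theory Defs
  imports "HOL-Analysis.Analysis"
begin

text \<open>Orthonormal basis of R^n, indexed by the finite type 'n (n = CARD('n)).\<close>
definition orthonormal_basis :: "('n::finite \<Rightarrow> real^'n) \<Rightarrow> bool" where
  "orthonormal_basis e \<longleftrightarrow> (\<forall>i j. e i \<bullet> e j = (if i = j then 1 else 0))"

definition orth_proj :: "(real^'n::finite) set \<Rightarrow> real^'n \<Rightarrow> real^'n" where
  "orth_proj M x = (THE y. y \<in> M \<and> (\<forall>z\<in>M. (x - y) \<bullet> z = 0))"

text \<open>Support of x with respect to the basis e: indices of nonzero coefficients
  (the coefficient of e i in x is x \<bullet> e i for an orthonormal basis).\<close>
definition supp_wrt :: "('n::finite \<Rightarrow> real^'n) \<Rightarrow> real^'n \<Rightarrow> 'n set" where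
  "supp_wrt e x = {i. x \<bullet> e i \<noteq> 0}"

definition PR_subspace :: "('n::finite \<Rightarrow> real^'n) \<Rightarrow> (real^'n) set \<Rightarrow> bool" where
  "PR_subspace e M \<longleftrightarrow> subspace M \<and>
     span (range (\<lambda>i. orth_proj M (e i))) = M \<and>
     (\<forall>x\<in>M. \<forall>y\<in>M.
        (\<forall>i. \<bar>x \<bullet> orth_proj M (e i)\<bar> = \<bar>y \<bullet> orth_proj M (e i)\<bar>) \<longrightarrow> x = y \<or> x = - y)"

definition maximal_PR_subspace :: "('n::finite \<Rightarrow> real^'n) \<Rightarrow> (real^'n) set \<Rightarrow> bool" where
  "maximal_PR_subspace e M \<longleftrightarrow> PR_subspace e M \<and> \<not> (\<exists>M'. PR_subspace e M' \<and> M \<subset> M')"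

end

theory Submission
  imports Defs
begin

text \<open>
  Write \<open>R\<^sub>A\<close> for the span of the \<open>e\<^sub>i\<close> with \<open>i \<in> A\<close>. Since
  \<open>x \<bullet> P\<^sub>M e\<^sub>i = x \<bullet> e\<^sub>i\<close> for \<open>x \<in> M\<close>, phase retrieval on \<open>M\<close>
  is the complement property: no two nonzero vectors of \<open>M\<close> have disjoint supports.
  If some nonzero \<open>x \<in> M\<close> had support \<open>T\<close> with \<open>|T| < k\<close>, a dimension count
  would give a nonzero vector in \<open>M \<inter> R\<^bsub>-T\<^esub>\<close>; so all supports have at least
  \<open>k\<close> elements. If all had more than \<open>k\<close>, then the finitely many subspaces
  \<open>(M + R\<^sub>A) \<inter> (M + R\<^bsub>-A\<^esub>)\<close>, and \<open>M + R\<^bsub>-A\<^esub>\<close> whenever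
  \<open>M \<inter> R\<^sub>A \<noteq> 0\<close>, would have dimension at most \<open>2k\<close> resp. \<open>n - 1\<close>, hence
  (as \<open>2k < n\<close>) could not cover \<open>\<real>\<^sup>n\<close>. Adjoining to \<open>M\<close> a vector \<open>w\<close> outside
  all of them keeps the complement property: if \<open>u \<in> R\<^sub>A\<close> and \<open>v \<in> R\<^bsub>-A\<^esub>\<close>
  are nonzero in \<open>M + \<real>w\<close>, solving for \<open>w\<close> puts it in one of these subspaces.
  This contradicts maximality.
\<close>

lemma set_plus_eq_sums: "S + T = {x + y |x y. x \<in> S \<and> y \<in> T}"
  by (auto simp: set_plus_def)

lemma subspace_set_plus:
  fixes S T :: "'a::euclidean_space set"
  shows "subspace S \<Longrightarrow> subspace T \<Longrightarrow> subspace (S + T)"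
  unfolding set_plus_eq_sums by (rule subspace_sums)

lemma dim_set_plus_Int:
  fixes S T :: "'a::euclidean_space set"
  shows "subspace S \<Longrightarrow> subspace T \<Longrightarrow> dim (S + T) + dim (S \<inter> T) = dim S + dim T"
  unfolding set_plus_eq_sums by (rule dim_sums_Int)

lemma dim_set_plus_le:
  fixes S T :: "'a::euclidean_space set"
  shows "subspace S \<Longrightarrow> subspace T \<Longrightarrow> dim (S + T) \<le> dim S + dim T"
  using dim_set_plus_Int by fastforce

lemma subset_set_plus_left:
  fixes S T :: "'a::monoid_add set"
  shows "0 \<in> T \<Longrightarrow> S \<subseteq> S + T"
  using set_plus_intro[of _ S 0 T] by auto

lemma subset_set_plus_right:
  fixes S T :: "'a::monoid_add set"
  shows "0 \<in> S \<Longrightarrow> T \<subseteq> S + T"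
  using set_plus_intro[of 0 S _ T] by auto

lemma mem_set_plus_if_scaleR_diff:
  assumes "subspace M" "subspace R" "y \<in> R" "y - t *\<^sub>R w \<in> M" "t \<noteq> 0"
  shows "w \<in> M + R"
proof -
  have "w = (- (1/t)) *\<^sub>R (y - t *\<^sub>R w) + (1/t) *\<^sub>R y"
    using assms(5) by (simp add: algebra_simps)
  also have "\<dots> \<in> M + R"
    using assms by (intro set_plus_intro subspace_scale)
  finally show ?thesis .
qed

lemma ex_not_in_Union_lowdim:
  fixes \<F> :: "'a::euclidean_space set set"
  assumes "finite \<F>" "\<And>S. S \<in> \<F> \<Longrightarrow> dim S < DIM('a)"
  obtains w where "w \<notin> \<Union>\<F>"
proof -
  have "negligible (\<Union>\<F>)"
    using assms by (intro negligible_Union negligible_lowdim)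
  then have "\<Union>\<F> \<noteq> UNIV"
    using non_negligible_UNIV by auto
  then show ?thesis
    using that by blast
qed

lemma orthonormal_basis_inj:
  assumes "orthonormal_basis e" shows "inj e"
proof (rule injI)
  fix i j assume "e i = e j"
  then have "e i \<bullet> e j = 1" using assms unfolding orthonormal_basis_def by metis
  then show "i = j" using assms unfolding orthonormal_basis_def by (metis zero_neq_one)
qed

lemma orthonormal_basis_independent:
  assumes "orthonormal_basis e" shows "independent (range e)"
proof (rule pairwise_orthogonal_independent)
  show "pairwise orthogonal (range e)"
    using assms unfolding orthonormal_basis_def pairwise_def orthogonal_def by auto
  show "0 \<notin> range e"
    using assms unfolding orthonormal_basis_def by (metis inner_zero_left rangeE zero_neq_one)
qed

lemma orthonormal_basis_span:
  fixes e :: "'n::finite \<Rightarrow> real^'n"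
  assumes "orthonormal_basis e" shows "span (range e) = UNIV"
proof -
  have "card (range e) = CARD('n)"
    using orthonormal_basis_inj[OF assms] by (simp add: card_image)
  then have "UNIV \<subseteq> span (range e)"
    by (intro card_ge_dim_independent orthonormal_basis_independent[OF assms])
      (auto simp: dim_subset_UNIV_cart)
  then show ?thesis by auto
qed

lemma supp_wrt_eq_empty_iff:
  assumes "orthonormal_basis e" shows "supp_wrt e x = {} \<longleftrightarrow> x = 0"
proof
  assume "supp_wrt e x = {}"
  then have "orthogonal x x"
    using orthonormal_basis_span[OF assms]
    by (intro orthogonal_to_span[of x "range e"]) (auto simp: supp_wrt_def orthogonal_def)
  then show "x = 0" by (simp add: orthogonal_def)
qed (simp add: supp_wrt_def)

lemma orth_proj:
  assumes "subspace M"
  shows "orth_proj M v \<in> M" "\<And>z. z \<in> M \<Longrightarrow> (v - orth_proj M v) \<bullet> z = 0"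
proof -
  obtain y z where y: "y \<in> M" and z: "\<And>w. w \<in> M \<Longrightarrow> orthogonal z w" and v: "v = y + z"
    using orthogonal_subspace_decomp_exists[of M v] unfolding span_eq_iff[THEN iffD2, OF assms]
    by blast
  have y_orth: "\<forall>w\<in>M. (v - y) \<bullet> w = 0"
    using z v by (simp add: orthogonal_def)
  have unique: "y' = y" if "y' \<in> M" "\<forall>w\<in>M. (v - y') \<bullet> w = 0" for y'
  proof -
    have "y' - y \<in> M" using that y assms by (simp add: subspace_diff)
    have "(y' - y) \<bullet> (y' - y) = ((v - y) - (v - y')) \<bullet> (y' - y)"
      by (simp add: algebra_simps)
    also have "\<dots> = 0"
      using that y_orth \<open>y' - y \<in> M\<close> by (simp add: inner_diff_left)
    finally show ?thesis by simp
  qed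
  have "orth_proj M v = y"
    unfolding orth_proj_def by (rule the_equality) (use y y_orth unique in blast)+
  then show "orth_proj M v \<in> M" "\<And>z. z \<in> M \<Longrightarrow> (v - orth_proj M v) \<bullet> z = 0"
    using y y_orth by auto
qed

lemma inner_orth_proj: "subspace M \<Longrightarrow> x \<in> M \<Longrightarrow> x \<bullet> orth_proj M v = x \<bullet> v"
  using orth_proj(2)[of M x v] by (metis eq_iff_diff_eq_0 inner_commute inner_diff_left)

lemma span_orth_proj_basis:
  assumes "orthonormal_basis e" "subspace M"
  shows "span (range (\<lambda>i. orth_proj M (e i))) = M" (is "span ?P = M")
proof
  show "span ?P \<subseteq> M"
    using orth_proj(1)[OF assms(2)] assms(2) by (intro span_minimal) auto
  show "M \<subseteq> span ?P"
  proof
    fix x assume x: "x \<in> M"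
    obtain y z where y: "y \<in> span ?P" and z: "\<And>w. w \<in> span ?P \<Longrightarrow> orthogonal z w"
      and xyz: "x = y + z"
      using orthogonal_subspace_decomp_exists by blast
    have "z \<in> M"
      using xyz x y \<open>span ?P \<subseteq> M\<close> assms(2) by (metis add_diff_cancel_left' subsetD subspace_diff)
    then have "z \<bullet> e i = 0" for i
      using z[of "orth_proj M (e i)"] inner_orth_proj[OF assms(2)]
      by (simp add: orthogonal_def span_base)
    then have "supp_wrt e z = {}" by (simp add: supp_wrt_def)
    then have "z = 0" using supp_wrt_eq_empty_iff[OF assms(1)] by blast
    then show "x \<in> span ?P" using xyz y by simp
  qed
qed

text \<open>Phase retrieval and the complement property agree for any family of vectors:
  \<open>|x \<bullet> e\<^sub>i| = |y \<bullet> e\<^sub>i|\<close> for all \<open>i\<close> says exactly that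
  \<open>x - y\<close> and \<open>x + y\<close> have disjoint supports.\<close>

lemma phase_retrieval_iff_complement_property:
  assumes "subspace M"
  shows "(\<forall>x\<in>M. \<forall>y\<in>M. (\<forall>i. \<bar>x \<bullet> e i\<bar> = \<bar>y \<bullet> e i\<bar>) \<longrightarrow> x = y \<or> x = - y)
     \<longleftrightarrow> (\<forall>u\<in>M. \<forall>v\<in>M. supp_wrt e u \<inter> supp_wrt e v = {} \<longrightarrow> u = 0 \<or> v = 0)"
proof (intro iffI ballI impI)
  fix u v
  assume PR: "\<forall>x\<in>M. \<forall>y\<in>M. (\<forall>i. \<bar>x \<bullet> e i\<bar> = \<bar>y \<bullet> e i\<bar>) \<longrightarrow> x = y \<or> x = - y"
    and uv: "u \<in> M" "v \<in> M" "supp_wrt e u \<inter> supp_wrt e v = {}"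
  have "\<bar>(u + v) \<bullet> e i\<bar> = \<bar>(u - v) \<bullet> e i\<bar>" for i
  proof -
    have "u \<bullet> e i = 0 \<or> v \<bullet> e i = 0"
      using uv(3) by (auto simp: supp_wrt_def)
    then show ?thesis by (auto simp: inner_add_left inner_diff_left)
  qed
  moreover have "u + v \<in> M" "u - v \<in> M"
    using uv assms by (auto simp: subspace_add subspace_diff)
  ultimately have "u + v = u - v \<or> u + v = - (u - v)"
    using PR by blast
  then have "2 *\<^sub>R v = 0 \<or> 2 *\<^sub>R u = 0"
    by (auto simp: scaleR_2 algebra_simps)
  then show "u = 0 \<or> v = 0" by auto
next
  fix x y
  assume CP: "\<forall>u\<in>M. \<forall>v\<in>M. supp_wrt e u \<inter> supp_wrt e v = {} \<longrightarrow> u = 0 \<or> v = 0"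
    and xy: "x \<in> M" "y \<in> M" "\<forall>i. \<bar>x \<bullet> e i\<bar> = \<bar>y \<bullet> e i\<bar>"
  have "supp_wrt e (x - y) \<inter> supp_wrt e (x + y) = {}"
    using xy(3) by (auto simp: supp_wrt_def inner_add_left inner_diff_left abs_eq_iff)
  moreover have "x + y \<in> M" "x - y \<in> M"
    using xy assms by (auto simp: subspace_add subspace_diff)
  ultimately have "x - y = 0 \<or> x + y = 0"
    using CP by blast
  then show "x = y \<or> x = - y" by (auto simp: add_eq_0_iff)
qed

lemma PR_subspace_iff_complement_property:
  assumes "orthonormal_basis e"
  shows "PR_subspace e M \<longleftrightarrow> subspace M \<and>
    (\<forall>u\<in>M. \<forall>v\<in>M. supp_wrt e u \<inter> supp_wrt e v = {} \<longrightarrow> u = 0 \<or> v = 0)"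
proof (cases "subspace M")
  case True
  then show ?thesis
    unfolding PR_subspace_def
    using span_orth_proj_basis[OF assms True] inner_orth_proj[OF True]
      phase_retrieval_iff_complement_property[OF True]
    by simp
qed (simp add: PR_subspace_def)

definition coord_subspace :: "('n::finite \<Rightarrow> real^'n) \<Rightarrow> 'n set \<Rightarrow> (real^'n) set" where
  "coord_subspace e A = {x. supp_wrt e x \<subseteq> A}"

lemma subspace_coord_subspace: "subspace (coord_subspace e A)"
  unfolding subspace_def coord_subspace_def supp_wrt_def
  by (auto simp: subset_iff inner_add_left) (metis add.right_neutral)

lemma coord_subspace_Int_compl:
  assumes "orthonormal_basis e" shows "coord_subspace e A \<inter> coord_subspace e (- A) = {0}"
  using supp_wrt_eq_empty_iff[OF assms] subspace_0[OF subspace_coord_subspace]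
  unfolding coord_subspace_def by blast

lemma card_add_card_Compl: "card (A :: 'n::finite set) + card (- A) = CARD('n)"
  using card_Un_disjoint[of A "- A"] by simp

lemma dim_coord_subspace:
  fixes e :: "'n::finite \<Rightarrow> real^'n"
  assumes "orthonormal_basis e" shows "dim (coord_subspace e A) = card A"
proof -
  have card_le: "card B \<le> dim (coord_subspace e B)" for B
  proof -
    have "e ` B \<subseteq> coord_subspace e B"
      using assms unfolding coord_subspace_def supp_wrt_def orthonormal_basis_def
      by (auto split: if_splits)
    moreover have "independent (e ` B)"
      using orthonormal_basis_independent[OF assms] by (rule independent_mono) auto
    ultimately have "card (e ` B) \<le> dim (coord_subspace e B)"
      by (rule independent_card_le_dim)
    then show ?thesis
      using orthonormal_basis_inj[OF assms] by (simp add: card_image inj_on_subset)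
  qed
  have "dim (coord_subspace e A) + dim (coord_subspace e (- A)) \<le> CARD('n)"
    using dim_set_plus_Int[OF subspace_coord_subspace subspace_coord_subspace, of e A e "- A"]
      coord_subspace_Int_compl[OF assms]
      dim_subset_UNIV_cart[of "coord_subspace e A + coord_subspace e (- A)"]
    by simp
  then show ?thesis
    using card_add_card_Compl[of A] card_le[of A] card_le[of "- A"] by linarith
qed

lemma coord_subspace_plus_compl:
  fixes e :: "'n::finite \<Rightarrow> real^'n"
  assumes "orthonormal_basis e" shows "coord_subspace e A + coord_subspace e (- A) = UNIV"
proof -
  have sR: "subspace (coord_subspace e A + coord_subspace e (- A))"
    by (intro subspace_set_plus subspace_coord_subspace)
  have "dim (coord_subspace e A + coord_subspace e (- A)) = CARD('n)"
    using dim_set_plus_Int[OF subspace_coord_subspace subspace_coord_subspace, of e A e "- A"]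
      coord_subspace_Int_compl[OF assms] dim_coord_subspace[OF assms] card_add_card_Compl[of A]
    by simp
  then have "span (coord_subspace e A + coord_subspace e (- A)) = UNIV"
    using dim_eq_full[of "coord_subspace e A + coord_subspace e (- A)"] by simp
  then show ?thesis using span_eq_iff[THEN iffD2, OF sR] by simp
qed

lemma PR_subspace_dim_le_card_supp:
  fixes e :: "'n::finite \<Rightarrow> real^'n"
  assumes onb: "orthonormal_basis e" and PR: "PR_subspace e M"
    and x: "x \<in> M" "x \<noteq> 0"
  shows "dim M \<le> card (supp_wrt e x)"
proof (rule ccontr)
  let ?T = "supp_wrt e x"
  assume "\<not> dim M \<le> card ?T"
  have sM: "subspace M" using PR unfolding PR_subspace_def by simp
  have "dim (M + coord_subspace e (- ?T)) + dim (M \<inter> coord_subspace e (- ?T))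
      = dim M + card (- ?T)"
    using dim_set_plus_Int[OF sM subspace_coord_subspace] dim_coord_subspace[OF onb] by simp
  moreover note card_add_card_Compl[of ?T] \<open>\<not> dim M \<le> card ?T\<close>
    dim_subset_UNIV_cart[of "M + coord_subspace e (- ?T)"]
  ultimately have "dim (M \<inter> coord_subspace e (- ?T)) \<noteq> 0"
    by linarith
  then obtain y where y: "y \<in> M" "supp_wrt e y \<subseteq> - ?T" "y \<noteq> 0"
    unfolding dim_eq_0 coord_subspace_def by blast
  then have "supp_wrt e x \<inter> supp_wrt e y = {}" by auto
  then show False
    using PR y x unfolding PR_subspace_iff_complement_property[OF onb] by blast
qed

definition PR_obstructions :: "('n::finite \<Rightarrow> real^'n) \<Rightarrow> (real^'n) set \<Rightarrow> (real^'n) set set" where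
  "PR_obstructions e M =
     range (\<lambda>A. (M + coord_subspace e A) \<inter> (M + coord_subspace e (- A))) \<union>
     {M + coord_subspace e (- A) | A. M \<inter> coord_subspace e A \<noteq> {0}}"

lemma finite_PR_obstructions: "finite (PR_obstructions e M)"
  unfolding PR_obstructions_def by simp

lemma dim_set_plus_coord_subspace_le:
  fixes e :: "'n::finite \<Rightarrow> real^'n"
  assumes "orthonormal_basis e" "subspace M"
  shows "dim (M + coord_subspace e A) \<le> dim M + card A"
  using dim_set_plus_le[OF assms(2) subspace_coord_subspace, of e A] dim_coord_subspace[OF assms(1)]
  by simp

lemma dim_Int_set_plus_coord_subspaces_le:
  fixes e :: "'n::finite \<Rightarrow> real^'n"
  assumes onb: "orthonormal_basis e" and sM: "subspace M"
  shows "dim ((M + coord_subspace e A) \<inter> (M + coord_subspace e (- A))) \<le> 2 * dim M"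
proof -
  let ?X = "M + coord_subspace e A" and ?Y = "M + coord_subspace e (- A)"
  have sXY: "subspace ?X" "subspace ?Y"
    using sM subspace_coord_subspace by (auto intro: subspace_set_plus)
  have "coord_subspace e A + coord_subspace e (- A) \<subseteq> ?X + ?Y"
    using sM by (intro set_plus_mono2 subset_set_plus_right) (auto simp: subspace_0)
  then have "?X + ?Y = UNIV"
    using coord_subspace_plus_compl[OF onb] by auto
  then show ?thesis
    using dim_set_plus_Int[OF sXY] dim_set_plus_coord_subspace_le[OF onb sM, of A]
      dim_set_plus_coord_subspace_le[OF onb sM, of "- A"] card_add_card_Compl[of A]
    by simp
qed

lemma dim_PR_obstructions_less:
  fixes e :: "'n::finite \<Rightarrow> real^'n"
  assumes onb: "orthonormal_basis e" and sM: "subspace M" and small: "2 * dim M < CARD('n)"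
    and sparse_free: "\<And>x. x \<in> M \<Longrightarrow> x \<noteq> 0 \<Longrightarrow> dim M < card (supp_wrt e x)"
    and S: "S \<in> PR_obstructions e M"
  shows "dim S < CARD('n)"
  using S unfolding PR_obstructions_def
proof (elim UnE rangeE CollectE exE conjE)
  fix A assume "S = (M + coord_subspace e A) \<inter> (M + coord_subspace e (- A))"
  then show ?thesis using dim_Int_set_plus_coord_subspaces_le[OF onb sM, of A] small by simp
next
  fix A assume S: "S = M + coord_subspace e (- A)" and "M \<inter> coord_subspace e A \<noteq> {0}"
  then obtain z where "z \<in> M" "z \<noteq> 0" "supp_wrt e z \<subseteq> A"
    using subspace_0[OF sM] subspace_0[OF subspace_coord_subspace]
    unfolding coord_subspace_def by blast
  then have "dim M < card A"
    using sparse_free card_mono[of A "supp_wrt e z"] by fastforce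
  then show ?thesis
    using S dim_set_plus_coord_subspace_le[OF onb sM, of "- A"] card_add_card_Compl[of A]
    by simp
qed

lemma mem_span_insert_decomp:
  assumes "subspace M" "u \<in> span (insert w M)"
  obtains t where "u - t *\<^sub>R w \<in> M"
  using assms(2) that unfolding span_insert span_eq_iff[THEN iffD2, OF assms(1)] by blast

lemma PR_subspace_span_insert:
  fixes e :: "'n::finite \<Rightarrow> real^'n"
  assumes onb: "orthonormal_basis e" and PR: "PR_subspace e M"
    and w: "w \<notin> \<Union>(PR_obstructions e M)"
  shows "PR_subspace e (span (insert w M))"
  unfolding PR_subspace_iff_complement_property[OF onb]
proof (intro conjI ballI impI subspace_span)
  have sM: "subspace M" using PR unfolding PR_subspace_def by simp
  have CP: "u = 0 \<or> v = 0" if "u \<in> M" "v \<in> M" "supp_wrt e u \<inter> supp_wrt e v = {}" for u v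
    using PR that unfolding PR_subspace_iff_complement_property[OF onb] by blast
  fix u v
  assume u: "u \<in> span (insert w M)" and v: "v \<in> span (insert w M)"
    and disj: "supp_wrt e u \<inter> supp_wrt e v = {}"
  obtain t1 where t1: "u - t1 *\<^sub>R w \<in> M" using mem_span_insert_decomp[OF sM u] .
  obtain t2 where t2: "v - t2 *\<^sub>R w \<in> M" using mem_span_insert_decomp[OF sM v] .
  define A where "A = supp_wrt e u"
  have uA: "u \<in> coord_subspace e A" and vA: "v \<in> coord_subspace e (- A)"
    using disj unfolding A_def coord_subspace_def by auto
  show "u = 0 \<or> v = 0"
  proof (rule ccontr)
    assume nz: "\<not> (u = 0 \<or> v = 0)"
    have w_A: "w \<in> M + coord_subspace e A" if "t1 \<noteq> 0"
      using mem_set_plus_if_scaleR_diff[OF sM subspace_coord_subspace uA t1 that] .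
    have w_A': "w \<in> M + coord_subspace e (- A)" if "t2 \<noteq> 0"
      using mem_set_plus_if_scaleR_diff[OF sM subspace_coord_subspace vA t2 that] .
    have u_M: "u \<in> M \<inter> coord_subspace e A" if "t1 = 0" using that t1 uA by simp
    have v_M: "v \<in> M \<inter> coord_subspace e (- A)" if "t2 = 0" using that t2 vA by simp
    consider "t1 = 0" "t2 \<noteq> 0" | "t1 \<noteq> 0" "t2 = 0" | "t1 \<noteq> 0" "t2 \<noteq> 0" | "t1 = 0" "t2 = 0"
      by blast
    then have "w \<in> \<Union>(PR_obstructions e M)"
    proof cases
      case 1
      then have "M + coord_subspace e (- A) \<in> PR_obstructions e M"
        using u_M nz unfolding PR_obstructions_def by blast
      then show ?thesis using w_A' 1 by blast
    next
      case 2
      then have "M + coord_subspace e (- (- A)) \<in> PR_obstructions e M"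
        using v_M nz unfolding PR_obstructions_def by blast
      then show ?thesis using w_A 2 by auto
    next
      case 3
      then show ?thesis using w_A w_A' unfolding PR_obstructions_def by blast
    next
      case 4
      then show ?thesis using u_M v_M CP disj nz by blast
    qed
    then show False using w by blast
  qed
qed

lemma PR_subspace_proper_extension:
  fixes e :: "'n::finite \<Rightarrow> real^'n"
  assumes onb: "orthonormal_basis e" and PR: "PR_subspace e M" and small: "2 * dim M < CARD('n)"
    and sparse_free: "\<And>x. x \<in> M \<Longrightarrow> x \<noteq> 0 \<Longrightarrow> dim M < card (supp_wrt e x)"
  obtains M' where "PR_subspace e M'" "M \<subset> M'"
proof -
  have sM: "subspace M" using PR unfolding PR_subspace_def by simp
  have "dim S < DIM(real^'n)" if "S \<in> PR_obstructions e M" for S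
    using dim_PR_obstructions_less[OF onb sM small sparse_free that] by simp
  then obtain w where w: "w \<notin> \<Union>(PR_obstructions e M)"
    using ex_not_in_Union_lowdim[OF finite_PR_obstructions] by blast
  have "M \<subseteq> (M + coord_subspace e {}) \<inter> (M + coord_subspace e (- {}))"
    by (simp add: subset_set_plus_left subspace_0[OF subspace_coord_subspace])
  then have "w \<notin> M"
    using w unfolding PR_obstructions_def by blast
  then have "M \<subset> span (insert w M)"
    by (auto intro: span_base)
  then show ?thesis
    by (rule that[OF PR_subspace_span_insert[OF onb PR w]])
qed

theorem theorem4p6:
  fixes e :: "'n::finite \<Rightarrow> real^'n" and M :: "(real^'n) set" and k :: nat
  assumes "orthonormal_basis e"
    and "maximal_PR_subspace e M"
    and "dim M = k"
    and "k < (CARD('n) + 1) div 2"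
  shows "k = Min {card (supp_wrt e x) | x. x \<in> M \<and> x \<noteq> 0}"
proof -
  have PR: "PR_subspace e M" and maximal: "\<nexists>M'. PR_subspace e M' \<and> M \<subset> M'"
    using assms(2) unfolding maximal_PR_subspace_def by auto
  have lower: "k \<le> card (supp_wrt e x)" if "x \<in> M" "x \<noteq> 0" for x
    using PR_subspace_dim_le_card_supp[OF assms(1) PR that] assms(3) by simp
  have "\<exists>x. x \<in> M \<and> x \<noteq> 0 \<and> card (supp_wrt e x) \<le> k"
  proof (rule ccontr)
    assume "\<not> ?thesis"
    then have "dim M < card (supp_wrt e x)" if "x \<in> M" "x \<noteq> 0" for x
      using that assms(3) by force
    moreover have "2 * dim M < CARD('n)" using assms(3,4) by presburger
    ultimately show False
      using PR_subspace_proper_extension[OF assms(1) PR] maximal by blast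
  qed
  then obtain x where x: "x \<in> M" "x \<noteq> 0" "card (supp_wrt e x) \<le> k" by blast
  let ?S = "{card (supp_wrt e x) | x. x \<in> M \<and> x \<noteq> 0}"
  have "finite ?S"
    by (rule finite_subset[of _ "{..CARD('n)}"]) (auto intro: card_mono)
  moreover have "k \<in> ?S" using x lower[OF x(1,2)] by force
  ultimately show ?thesis using lower by (intro Min_eqI[symmetric]) auto
qed

end
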